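(* For any lattice $L\subseteq\mathbb{R}^m$, if $C$ is a lattice code in $\mathbb{R}^m/L$, then $|C|\in N(L):=\{\|z\|_2^m:z\in\overline{L}\setminus\{0\}\}$.
   Context: A lattice is a discrete full-rank subgroup of $\mathbb{R}^m$; $\ell(L)$ is the smallest Euclidean norm of a nonzero vector of $L$ and $\overline{L}:=\ell(L)^{-1}\cdot L$. $\operatorname{CO}(m):=\{cQ:c>0,Q\in\operatorname{O}(m)\}$. A lattice code in $\mathbb{R}^m/L$ is a set $(TL)/L$ where $T\in\operatorname{CO}(m)$ is such that $L\subseteq TL$. *)

theory Defs
  imports "HOL-Analysis.Analysis"
begin

definition is_lattice :: "(real^'m) set \<Rightarrow> bool" where
  "is_lattice L \<longleftrightarrow>
     0 \<in> L \<and> (\<forall>x\<in>L. \<forall>y\<in>L. x + y \<in> L) \<and> (\<forall>x\<in>L. - x \<in> L) \<and>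
     (\<forall>x\<in>L. \<exists>e>0. \<forall>y\<in>L. dist y x < e \<longrightarrow> y = x) \<and>
     span L = UNIV"

definition min_norm :: "(real^'m) set \<Rightarrow> real" where
  "min_norm L = Inf {norm x | x. x \<in> L \<and> x \<noteq> 0}"

definition normalized_lattice :: "(real^'m) set \<Rightarrow> (real^'m) set" where
  "normalized_lattice L = (\<lambda>x. inverse (min_norm L) *\<^sub>R x) ` L"

definition CO :: "((real^'m) \<Rightarrow> (real^'m)) set" where
  "CO = {T. \<exists>c Q. c > 0 \<and> orthogonal_transformation Q \<and> T = (\<lambda>x. c *\<^sub>R Q x)}"

definition quotient_set :: "(real^'m) set \<Rightarrow> (real^'m) set \<Rightarrow> (real^'m) set set" where
  "quotient_set M L = (\<lambda>x. (\<lambda>y. x + y) ` L) ` M"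

definition is_lattice_code :: "(real^'m) set \<Rightarrow> (real^'m) set set \<Rightarrow> bool" where
  "is_lattice_code L C \<longleftrightarrow>
     (\<exists>T \<in> CO. L \<subseteq> T ` L \<and> C = quotient_set (T ` L) L)"

definition N_set :: "(real^'m) set \<Rightarrow> real set" where
  "N_set L = {norm z ^ CARD('m) | z. z \<in> normalized_lattice L \<and> z \<noteq> 0}"

end

(*
  Write C = TL/L with T = c Q, Q orthogonal. A basis of R^m chosen inside L spans over the
  integers a subgroup Gamma of L with a bounded fundamental domain F (a half-open
  parallelepiped). For every discrete group Lambda containing Gamma, double counting the
  reflected translates l - F (l in Lambda) that meet a ball B_R gives
  #(Lambda cap B_R) * vol F ~ [Lambda : Gamma] * vol B_R  as R -> oo.
  Applied to Lambda = L and Lambda = TL, together with #(TL cap B_R) = #(L cap B_(R/c)), this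
  yields [TL : Gamma] = c^(-m) [L : Gamma], hence |C| = [TL : L] = c^(-m). Finally, if
  u = T v is a shortest nonzero vector of L, then v / l(L) lies in the normalised lattice
  and has norm 1/c.
*)
theory Submission
  imports Defs
begin

section \<open>Additive subgroups, cosets and fundamental domains\<close>

definition add_subgroup :: "'a::ab_group_add set \<Rightarrow> bool" where
  "add_subgroup G \<longleftrightarrow> 0 \<in> G \<and> (\<forall>a\<in>G. \<forall>b\<in>G. a - b \<in> G)"

lemma
  assumes "add_subgroup G"
  shows add_subgroup_zero: "0 \<in> G"
    and add_subgroup_diff: "a \<in> G \<Longrightarrow> b \<in> G \<Longrightarrow> a - b \<in> G"
    and add_subgroup_minus: "a \<in> G \<Longrightarrow> - a \<in> G"
    and add_subgroup_add: "a \<in> G \<Longrightarrow> b \<in> G \<Longrightarrow> a + b \<in> G"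
proof -
  show 0: "0 \<in> G" and diff: "a \<in> G \<Longrightarrow> b \<in> G \<Longrightarrow> a - b \<in> G" for a b
    using assms by (auto simp: add_subgroup_def)
  show minus: "- a \<in> G" if "a \<in> G" for a
    using diff[OF 0 that] by simp
  show "a + b \<in> G" if "a \<in> G" "b \<in> G"
    using diff[OF that(1) minus[OF that(2)]] by simp
qed

lemma add_subgroup_sum:
  assumes "add_subgroup G" "\<And>i. i \<in> I \<Longrightarrow> f i \<in> G"
  shows "sum f I \<in> G"
  using assms(2)
  by (induction I rule: infinite_finite_induct)
     (auto intro: add_subgroup_zero[OF assms(1)] add_subgroup_add[OF assms(1)])

lemma add_subgroup_Ints_scaleR:
  fixes G :: "'a::real_vector set"
  assumes G: "add_subgroup G" and "k \<in> \<int>" "v \<in> G"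
  shows "k *\<^sub>R v \<in> G"
proof -
  have nat: "real n *\<^sub>R v \<in> G" for n
    by (induction n) (auto simp: algebra_simps intro: add_subgroup_zero[OF G] add_subgroup_add[OF G] \<open>v \<in> G\<close>)
  from \<open>k \<in> \<int>\<close> obtain i where "k = of_int i" by (auto elim: Ints_cases)
  then consider "k = real (nat i)" | "k = - real (nat (- i))" by linarith
  then show ?thesis
    by cases (use nat add_subgroup_minus[OF G nat] in auto)
qed

lemma add_subgroup_linear_image:
  assumes "linear f" "add_subgroup G"
  shows "add_subgroup (f ` G)"
  using assms unfolding add_subgroup_def by (force simp: linear_0 linear_diff[symmetric])

lemma mem_coset_iff:
  fixes x :: "'a::ab_group_add"
  shows "y \<in> (+) x ` G \<longleftrightarrow> y - x \<in> G"
  by (auto simp: image_iff intro: bexI[of _ "y - x"])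

lemma coset_eq_iff:
  assumes G: "add_subgroup G"
  shows "(+) x ` G = (+) y ` G \<longleftrightarrow> x - y \<in> G"
proof
  assume "(+) x ` G = (+) y ` G"
  moreover have "x \<in> (+) x ` G"
    using add_subgroup_zero[OF G] by force
  ultimately show "x - y \<in> G"
    using mem_coset_iff by blast
next
  assume "x - y \<in> G"
  have "z - x \<in> G \<longleftrightarrow> z - y \<in> G" for z
    using add_subgroup_add[OF G _ \<open>x - y \<in> G\<close>, of "z - x"]
      add_subgroup_diff[OF G _ \<open>x - y \<in> G\<close>, of "z - y"] by auto
  then show "(+) x ` G = (+) y ` G"
    by (auto simp: mem_coset_iff[symmetric])
qed

text \<open>Type-generic counterpart of \<^const>\<open>quotient_set\<close>, which is restricted to \<open>real^'m\<close>.\<close>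

definition cosets :: "'a::ab_group_add set \<Rightarrow> 'a set \<Rightarrow> 'a set set" where
  "cosets \<Lambda> \<Gamma> = (\<lambda>l. (+) l ` \<Gamma>) ` \<Lambda>"

definition fundamental_domain :: "'a::ab_group_add set \<Rightarrow> 'a set \<Rightarrow> bool" where
  "fundamental_domain \<Gamma> F \<longleftrightarrow> (\<forall>z. \<exists>!g. g \<in> \<Gamma> \<and> z - g \<in> F)"

lemma coset_subset_coset_iff:
  assumes \<Gamma>: "add_subgroup \<Gamma>" and M: "add_subgroup M" "\<Gamma> \<subseteq> M"
  shows "(+) l ` \<Gamma> \<subseteq> (+) x ` M \<longleftrightarrow> l - x \<in> M"
proof
  assume "(+) l ` \<Gamma> \<subseteq> (+) x ` M"
  moreover have "l \<in> (+) l ` \<Gamma>"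
    using add_subgroup_zero[OF \<Gamma>] by force
  ultimately show "l - x \<in> M"
    using mem_coset_iff by blast
next
  assume "l - x \<in> M"
  show "(+) l ` \<Gamma> \<subseteq> (+) x ` M"
  proof
    fix y assume "y \<in> (+) l ` \<Gamma>"
    then have "y - l \<in> M"
      using M(2) by (auto simp: mem_coset_iff)
    then have "(l - x) + (y - l) \<in> M"
      by (rule add_subgroup_add[OF M(1) \<open>l - x \<in> M\<close>])
    then show "y \<in> (+) x ` M"
      by (simp add: mem_coset_iff)
  qed
qed

lemma bij_betw_fundamental_domain_cosets:
  assumes \<Lambda>: "add_subgroup \<Lambda>" and \<Gamma>: "add_subgroup \<Gamma>" "\<Gamma> \<subseteq> \<Lambda>" and F: "fundamental_domain \<Gamma> F"
  shows "bij_betw (\<lambda>l. (+) l ` \<Gamma>) {l \<in> \<Lambda>. l - x \<in> F} (cosets \<Lambda> \<Gamma>)"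
proof (rule bij_betw_imageI)
  show "inj_on (\<lambda>l. (+) l ` \<Gamma>) {l \<in> \<Lambda>. l - x \<in> F}"
  proof (rule inj_onI)
    fix l1 l2
    assume l1: "l1 \<in> {l \<in> \<Lambda>. l - x \<in> F}" and l2: "l2 \<in> {l \<in> \<Lambda>. l - x \<in> F}"
      and "(+) l1 ` \<Gamma> = (+) l2 ` \<Gamma>"
    then have "l1 - l2 \<in> \<Gamma>"
      by (simp add: coset_eq_iff[OF \<Gamma>(1)])
    moreover have "(l1 - x) - (l1 - l2) \<in> F" "(l1 - x) - 0 \<in> F"
      using l1 l2 by simp_all
    ultimately have "l1 - l2 = 0"
      using F add_subgroup_zero[OF \<Gamma>(1)] unfolding fundamental_domain_def by blast
    then show "l1 = l2" by simp
  qed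
  show "(\<lambda>l. (+) l ` \<Gamma>) ` {l \<in> \<Lambda>. l - x \<in> F} = cosets \<Lambda> \<Gamma>"
  proof
    show "(\<lambda>l. (+) l ` \<Gamma>) ` {l \<in> \<Lambda>. l - x \<in> F} \<subseteq> cosets \<Lambda> \<Gamma>"
      by (auto simp: cosets_def)
    show "cosets \<Lambda> \<Gamma> \<subseteq> (\<lambda>l. (+) l ` \<Gamma>) ` {l \<in> \<Lambda>. l - x \<in> F}"
    proof
      fix C assume "C \<in> cosets \<Lambda> \<Gamma>"
      then obtain l where l: "l \<in> \<Lambda>" "C = (+) l ` \<Gamma>"
        by (auto simp: cosets_def)
      obtain g where g: "g \<in> \<Gamma>" "l - x - g \<in> F"
        using F unfolding fundamental_domain_def by blast
      have "l - g \<in> \<Lambda>"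
        using l g \<Gamma>(2) by (blast intro: add_subgroup_diff[OF \<Lambda>])
      moreover have "C = (+) (l - g) ` \<Gamma>"
        using l g by (simp add: coset_eq_iff[OF \<Gamma>(1)])
      moreover have "l - g - x \<in> F"
        using g(2) by (simp add: algebra_simps)
      ultimately show "C \<in> (\<lambda>l. (+) l ` \<Gamma>) ` {l \<in> \<Lambda>. l - x \<in> F}"
        by blast
    qed
  qed
qed

lemma cosets_containing_coset:
  assumes M: "add_subgroup M" and \<Gamma>: "add_subgroup \<Gamma>" "\<Gamma> \<subseteq> M" and "l \<in> \<Lambda>"
  shows "{C \<in> cosets \<Lambda> M. (+) l ` \<Gamma> \<subseteq> C} = {(+) l ` M}"
proof -
  have "(+) l ` \<Gamma> \<subseteq> (+) x ` M \<longleftrightarrow> (+) x ` M = (+) l ` M" for x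
    using coset_subset_coset_iff[OF \<Gamma>(1) M \<Gamma>(2)] coset_eq_iff[OF M, of l x] by auto
  then show ?thesis
    using \<open>l \<in> \<Lambda>\<close> unfolding cosets_def by blast
qed

lemma cosets_inside_coset:
  assumes \<Lambda>: "add_subgroup \<Lambda>" and M: "add_subgroup M" "M \<subseteq> \<Lambda>"
    and \<Gamma>: "add_subgroup \<Gamma>" "\<Gamma> \<subseteq> M" and "x \<in> \<Lambda>"
  shows "{D \<in> cosets \<Lambda> \<Gamma>. D \<subseteq> (+) x ` M} = (`) ((+) x) ` cosets M \<Gamma>"
proof -
  note sub_iff = coset_subset_coset_iff[OF \<Gamma>(1) M(1) \<Gamma>(2)]
  have "(`) ((+) x) ` cosets M \<Gamma> = (\<lambda>m. (+) (x + m) ` \<Gamma>) ` M"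
    by (simp add: cosets_def image_image add.assoc)
  also have "\<dots> = {D \<in> cosets \<Lambda> \<Gamma>. D \<subseteq> (+) x ` M}"
  proof (intro set_eqI iffI)
    fix D assume "D \<in> (\<lambda>m. (+) (x + m) ` \<Gamma>) ` M"
    then obtain m where m: "m \<in> M" "D = (+) (x + m) ` \<Gamma>"
      by blast
    have "x + m \<in> \<Lambda>"
      using \<open>x \<in> \<Lambda>\<close> M(2) m(1) by (blast intro: add_subgroup_add[OF \<Lambda>])
    moreover have "D \<subseteq> (+) x ` M"
      using m sub_iff[of "x + m" x] by simp
    ultimately show "D \<in> {D \<in> cosets \<Lambda> \<Gamma>. D \<subseteq> (+) x ` M}"
      using m(2) by (auto simp: cosets_def)
  next
    fix D assume "D \<in> {D \<in> cosets \<Lambda> \<Gamma>. D \<subseteq> (+) x ` M}"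
    then obtain l where "D = (+) l ` \<Gamma>" "l - x \<in> M"
      by (auto simp: cosets_def sub_iff)
    then show "D \<in> (\<lambda>m. (+) (x + m) ` \<Gamma>) ` M"
      by (intro image_eqI[of _ _ "l - x"]) auto
  qed
  finally show ?thesis ..
qed

lemma card_cosets_tower:
  assumes \<Lambda>: "add_subgroup \<Lambda>" and M: "add_subgroup M" "M \<subseteq> \<Lambda>"
    and \<Gamma>: "add_subgroup \<Gamma>" "\<Gamma> \<subseteq> M" and fin: "finite (cosets \<Lambda> \<Gamma>)"
  shows "card (cosets \<Lambda> \<Gamma>) = card (cosets \<Lambda> M) * card (cosets M \<Gamma>)"
proof -
  note unique = cosets_containing_coset[OF M(1) \<Gamma>]
  have fibre_card: "card {D \<in> cosets \<Lambda> \<Gamma>. D \<subseteq> C} = card (cosets M \<Gamma>)" if C: "C \<in> cosets \<Lambda> M" for C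
  proof -
    obtain x where "x \<in> \<Lambda>" "C = (+) x ` M"
      using C unfolding cosets_def by blast
    moreover have "inj_on ((`) ((+) x)) (cosets M \<Gamma>)"
      by (rule inj_onI) (simp add: inj_image_eq_iff)
    ultimately show ?thesis
      by (simp add: cosets_inside_coset[OF \<Lambda> M \<Gamma>] card_image)
  qed
  have "(\<lambda>D. \<Union>{C \<in> cosets \<Lambda> M. D \<subseteq> C}) ` cosets \<Lambda> \<Gamma>
      = (\<lambda>l. \<Union>{C \<in> cosets \<Lambda> M. (+) l ` \<Gamma> \<subseteq> C}) ` \<Lambda>"
    by (simp add: cosets_def[of \<Lambda> \<Gamma>] image_image)
  also have "\<dots> = (\<lambda>l. (+) l ` M) ` \<Lambda>"
    by (rule image_cong) (simp_all add: unique)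
  also have "\<dots> = cosets \<Lambda> M"
    by (simp only: cosets_def)
  finally have "finite (cosets \<Lambda> M)"
    by (metis finite_imageI fin)
  \<comment> \<open>Double counting of the pairs \<open>D \<subseteq> C\<close> with \<open>D \<in> \<Lambda>/\<Gamma>\<close> and \<open>C \<in> \<Lambda>/M\<close>.\<close>
  then have "(\<Sum>D\<in>cosets \<Lambda> \<Gamma>. card {C \<in> cosets \<Lambda> M. D \<subseteq> C}) = card (cosets M \<Gamma>) * card (cosets \<Lambda> M)"
    using fin fibre_card by (intro sum_multicount) auto
  moreover have "card {C \<in> cosets \<Lambda> M. D \<subseteq> C} = 1" if "D \<in> cosets \<Lambda> \<Gamma>" for D
    using that unique by (auto simp: cosets_def[of \<Lambda> \<Gamma>])
  ultimately show ?thesis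
    by simp
qed

section \<open>Counting points of a discrete group in balls\<close>

lemma countable_if_finite_inter_cball:
  fixes S :: "'a::real_normed_vector set"
  assumes "\<And>r. finite (S \<inter> cball 0 r)"
  shows "countable S"
proof -
  have "S = (\<Union>n::nat. S \<inter> cball 0 (real n))"
    using real_arch_simple by (auto simp: subset_eq)
  also have "countable \<dots>"
    by (rule countable_UN) (auto intro: countable_finite assms)
  finally show ?thesis .
qed

lemma emeasure_lborel_reflection:
  fixes F :: "'a::euclidean_space set"
  assumes [measurable]: "F \<in> sets borel"
  shows "emeasure lborel {x. l - x \<in> F} = emeasure lborel F"
proof -
  have "(lborel :: 'a measure) = distr lborel borel (\<lambda>x. l + (-1) *\<^sub>R x)"
    using lborel_affine[of "-1" l] by (simp add: density_1)
  then have "emeasure lborel F = emeasure (distr lborel borel (\<lambda>x. l - x)) F"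
    by simp
  also have "\<dots> = emeasure lborel {x. l - x \<in> F}"
    by (subst emeasure_distr) (auto simp: vimage_def)
  finally show ?thesis ..
qed

lemma nn_integral_emeasure_translates:
  fixes \<Lambda> F A :: "'a::euclidean_space set"
  assumes "countable \<Lambda>" and [measurable]: "F \<in> sets borel" "A \<in> sets borel"
    and fin: "\<And>x. finite {l \<in> \<Lambda>. l - x \<in> F}" and card_eq: "\<And>x. card {l \<in> \<Lambda>. l - x \<in> F} = k"
  shows "(\<integral>\<^sup>+l. emeasure lborel (A \<inter> {x. l - x \<in> F}) \<partial>count_space \<Lambda>) = of_nat k * emeasure lborel A"
proof -
  have translate: "emeasure lborel (A \<inter> {x. l - x \<in> F}) = (\<integral>\<^sup>+x. indicator A x * indicator F (l - x) \<partial>lborel)" for l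
  proof -
    have "A \<inter> {x. l - x \<in> F} \<in> sets lborel"
      by measurable
    then have "emeasure lborel (A \<inter> {x. l - x \<in> F}) = (\<integral>\<^sup>+x. indicator (A \<inter> {x. l - x \<in> F}) x \<partial>lborel)"
      by simp
    also have "\<dots> = (\<integral>\<^sup>+x. indicator A x * indicator F (l - x) \<partial>lborel)"
      by (intro nn_integral_cong) (auto simp: indicator_def)
    finally show ?thesis .
  qed
  have count: "(\<integral>\<^sup>+l. indicator A x * indicator F (l - x) \<partial>count_space \<Lambda>) = of_nat k * indicator A x" for x
  proof -
    have "(\<integral>\<^sup>+l. indicator F (l - x) \<partial>count_space \<Lambda>)
        = (\<integral>\<^sup>+l. indicator {l \<in> \<Lambda>. l - x \<in> F} l \<partial>count_space \<Lambda>)"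
      by (intro nn_integral_cong) (auto simp: indicator_def)
    also have "\<dots> = emeasure (count_space \<Lambda>) {l \<in> \<Lambda>. l - x \<in> F}"
      by (intro nn_integral_indicator) auto
    also have "\<dots> = of_nat k"
      using fin card_eq by simp
    finally show ?thesis
      by (simp add: nn_integral_cmult mult.commute)
  qed
  have "(\<integral>\<^sup>+l. emeasure lborel (A \<inter> {x. l - x \<in> F}) \<partial>count_space \<Lambda>)
      = (\<integral>\<^sup>+x. \<integral>\<^sup>+l. indicator A x * indicator F (l - x) \<partial>count_space \<Lambda> \<partial>lborel)"
    unfolding translate using \<open>countable \<Lambda>\<close> by (intro nn_integral_count_space_nn_integral[symmetric]) auto
  also have "\<dots> = of_nat k * emeasure lborel A"
    by (simp add: count nn_integral_cmult_indicator)
  finally show ?thesis .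
qed

lemma finite_cosets_if_bounded_fundamental_domain:
  fixes \<Lambda> \<Gamma> F :: "'a::real_normed_vector set"
  assumes "add_subgroup \<Lambda>" "add_subgroup \<Gamma>" "\<Gamma> \<subseteq> \<Lambda>" "fundamental_domain \<Gamma> F"
    and "bounded F" and "\<And>r. finite (\<Lambda> \<inter> cball 0 r)"
  shows "finite (cosets \<Lambda> \<Gamma>)"
proof -
  obtain d where "\<forall>x\<in>F. norm x \<le> d"
    using \<open>bounded F\<close> bounded_pos by blast
  then have "finite {l \<in> \<Lambda>. l - 0 \<in> F}"
    by (auto intro: finite_subset[OF _ assms(6)[of d]])
  then show ?thesis
    using bij_betw_finite[OF bij_betw_fundamental_domain_cosets[OF assms(1-4), of 0]] by simp
qed

lemma nn_integral_count_space_indicator_mult: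
  assumes "finite (\<Lambda> \<inter> S)"
  shows "(\<integral>\<^sup>+l. indicator S l * c \<partial>count_space \<Lambda>) = of_nat (card (\<Lambda> \<inter> S)) * c"
proof -
  have "(\<integral>\<^sup>+l. indicator S l \<partial>count_space \<Lambda>) = (\<integral>\<^sup>+l. indicator (\<Lambda> \<inter> S) l \<partial>count_space \<Lambda>)"
    by (intro nn_integral_cong) (auto simp: indicator_def)
  also have "\<dots> = emeasure (count_space \<Lambda>) (\<Lambda> \<inter> S)"
    by (intro nn_integral_indicator) auto
  finally show ?thesis
    using assms by (simp add: nn_integral_multc)
qed

lemma emeasure_inter_reflected_translate_le:
  fixes F :: "'a::euclidean_space set"
  assumes [measurable]: "F \<in> sets borel" and Fd: "F \<subseteq> cball 0 d"
  shows "emeasure lborel (cball 0 (R - d) \<inter> {x. l - x \<in> F}) \<le> indicator (cball 0 R) l * emeasure lborel F"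
proof (cases "norm l \<le> R")
  case True
  have "emeasure lborel (cball 0 (R - d) \<inter> {x. l - x \<in> F}) \<le> emeasure lborel {x. l - x \<in> F}"
    by (rule emeasure_mono) auto
  then show ?thesis
    using True by (simp add: emeasure_lborel_reflection)
next
  case False
  have "cball 0 (R - d) \<inter> {x. l - x \<in> F} = {}"
  proof (rule ccontr)
    assume "cball 0 (R - d) \<inter> {x. l - x \<in> F} \<noteq> {}"
    then obtain x where "norm x \<le> R - d" "l - x \<in> F"
      by auto
    moreover have "norm (l - x) \<le> d"
      using Fd \<open>l - x \<in> F\<close> by auto
    ultimately show False
      using False norm_triangle_ineq[of x "l - x"] by simp
  qed
  then show ?thesis by simp
qed

lemma emeasure_inter_reflected_translate_ge:
  fixes F :: "'a::euclidean_space set"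
  assumes [measurable]: "F \<in> sets borel" and Fd: "F \<subseteq> cball 0 d"
  shows "indicator (cball 0 R) l * emeasure lborel F \<le> emeasure lborel (cball 0 (R + d) \<inter> {x. l - x \<in> F})"
proof (cases "norm l \<le> R")
  case True
  have "{x. l - x \<in> F} \<subseteq> cball 0 (R + d)"
  proof
    fix x assume "x \<in> {x. l - x \<in> F}"
    then have "norm (l - x) \<le> d"
      using Fd by auto
    then show "x \<in> cball 0 (R + d)"
      using True norm_triangle_ineq4[of l "l - x"] by simp
  qed
  then show ?thesis
    using True by (simp add: emeasure_lborel_reflection Int_absorb1)
qed simp

lemma card_inter_cball_bounds:
  fixes \<Lambda> \<Gamma> F :: "'a::euclidean_space set"
  assumes \<Lambda>: "add_subgroup \<Lambda>" and \<Gamma>: "add_subgroup \<Gamma>" "\<Gamma> \<subseteq> \<Lambda>" and F: "fundamental_domain \<Gamma> F"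
    and [measurable]: "F \<in> sets borel" and Fd: "F \<subseteq> cball 0 d" and fin: "\<And>r. finite (\<Lambda> \<inter> cball 0 r)"
  shows "real (card (cosets \<Lambda> \<Gamma>)) * measure lborel (cball (0::'a) (R - d))
      \<le> real (card (\<Lambda> \<inter> cball 0 R)) * measure lborel F"
    and "real (card (\<Lambda> \<inter> cball 0 R)) * measure lborel F
      \<le> real (card (cosets \<Lambda> \<Gamma>)) * measure lborel (cball (0::'a) (R + d))"
proof -
  define k where "k = card (cosets \<Lambda> \<Gamma>)"
  define N where "N = card (\<Lambda> \<inter> cball 0 R)"
  note bij = bij_betw_fundamental_domain_cosets[OF \<Lambda> \<Gamma> F]
  have bounded: "bounded F"
    using bounded_subset[OF bounded_cball Fd] .
  have "finite (cosets \<Lambda> \<Gamma>)"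
    by (rule finite_cosets_if_bounded_fundamental_domain[OF \<Lambda> \<Gamma> F bounded fin])
  then have translates: "(\<integral>\<^sup>+l. emeasure lborel (A \<inter> {x. l - x \<in> F}) \<partial>count_space \<Lambda>) = of_nat k * emeasure lborel A"
    if "A \<in> sets borel" for A
    using bij_betw_finite[OF bij] bij_betw_same_card[OF bij] countable_if_finite_inter_cball[OF fin]
    by (intro nn_integral_emeasure_translates) (auto simp: k_def that)
  have count: "(\<integral>\<^sup>+l. indicator (cball 0 R) l * emeasure lborel F \<partial>count_space \<Lambda>) = of_nat N * emeasure lborel F"
    unfolding N_def by (rule nn_integral_count_space_indicator_mult[OF fin])
  have "emeasure lborel F < \<infinity>"
    using bounded by (rule emeasure_bounded_finite)
  then have ennreal_F: "emeasure lborel F = ennreal (measure lborel F)"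
    by (simp add: emeasure_eq_ennreal_measure)
  have ennreal_cball: "emeasure lborel (cball (0::'a) r) = ennreal (measure lborel (cball (0::'a) r))" for r
    using emeasure_lborel_cball_finite[of "0::'a" r] by (intro emeasure_eq_ennreal_measure) auto
  have "of_nat k * emeasure lborel (cball (0::'a) (R - d))
      = (\<integral>\<^sup>+l. emeasure lborel (cball 0 (R - d) \<inter> {x. l - x \<in> F}) \<partial>count_space \<Lambda>)"
    by (simp add: translates)
  also have "\<dots> \<le> of_nat N * emeasure lborel F"
    unfolding count[symmetric] by (intro nn_integral_mono emeasure_inter_reflected_translate_le Fd) simp
  finally show "real k * measure lborel (cball (0::'a) (R - d)) \<le> real N * measure lborel F"
    by (simp add: ennreal_F ennreal_cball ennreal_of_nat_eq_real_of_nat ennreal_mult''[symmetric])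
  have "of_nat N * emeasure lborel F
      \<le> (\<integral>\<^sup>+l. emeasure lborel (cball 0 (R + d) \<inter> {x. l - x \<in> F}) \<partial>count_space \<Lambda>)"
    unfolding count[symmetric] by (intro nn_integral_mono emeasure_inter_reflected_translate_ge Fd) simp
  also have "\<dots> = of_nat k * emeasure lborel (cball (0::'a) (R + d))"
    by (simp add: translates)
  finally show "real N * measure lborel F \<le> real k * measure lborel (cball (0::'a) (R + d))"
    by (simp add: ennreal_F ennreal_cball ennreal_of_nat_eq_real_of_nat ennreal_mult''[symmetric])
qed

lemma tendsto_divide_power_at_top_if_sandwiched:
  fixes f :: "real \<Rightarrow> real"
  assumes "\<forall>\<^sub>F R in at_top. a * (R - d) ^ m \<le> f R \<and> f R \<le> a * (R + d) ^ m"
  shows "((\<lambda>R. f R / R ^ m) \<longlongrightarrow> a) at_top"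
proof -
  have "((\<lambda>R. a * ((R + e) / R) ^ m) \<longlongrightarrow> a) at_top" for e :: real
  proof -
    have "((\<lambda>R. 1 + e / R) \<longlongrightarrow> 1 + 0) at_top"
      by (intro tendsto_add tendsto_const tendsto_divide_0[OF tendsto_const]
          filterlim_at_top_imp_at_infinity filterlim_ident)
    moreover have "\<forall>\<^sub>F R in at_top. 1 + e / R = (R + e) / R"
      using eventually_gt_at_top[of 0] by eventually_elim (simp add: field_simps)
    ultimately have "((\<lambda>R. (R + e) / R) \<longlongrightarrow> 1) at_top"
      by (simp add: tendsto_cong)
    from tendsto_mult[OF tendsto_const tendsto_power[OF this]] show ?thesis
      by simp
  qed
  from this[of "- d"] this[of d] show ?thesis
  proof (rule tendsto_sandwich[rotated 2])
    show "\<forall>\<^sub>F R in at_top. a * ((R + - d) / R) ^ m \<le> f R / R ^ m"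
      using assms eventually_gt_at_top[of 0]
    proof eventually_elim
      case (elim R)
      then have "a * (R - d) ^ m / R ^ m \<le> f R / R ^ m"
        by (intro divide_right_mono) auto
      then show ?case
        by (simp add: power_divide)
    qed
    show "\<forall>\<^sub>F R in at_top. f R / R ^ m \<le> a * ((R + d) / R) ^ m"
      using assms eventually_gt_at_top[of 0]
    proof eventually_elim
      case (elim R)
      then have "f R / R ^ m \<le> a * (R + d) ^ m / R ^ m"
        by (intro divide_right_mono) auto
      then show ?case
        by (simp add: power_divide)
    qed
  qed
qed

lemma card_inter_cball_asymptotics:
  fixes \<Lambda> \<Gamma> F :: "'a::euclidean_space set"
  assumes \<Lambda>: "add_subgroup \<Lambda>" and \<Gamma>: "add_subgroup \<Gamma>" "\<Gamma> \<subseteq> \<Lambda>" and F: "fundamental_domain \<Gamma> F"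
    and "F \<in> sets borel" "bounded F" and fin: "\<And>r. finite (\<Lambda> \<inter> cball 0 r)"
  shows "((\<lambda>R. real (card (\<Lambda> \<inter> cball 0 R)) * measure lborel F / R ^ DIM('a))
    \<longlongrightarrow> real (card (cosets \<Lambda> \<Gamma>)) * unit_ball_vol DIM('a)) at_top"
proof -
  obtain d where "\<forall>x\<in>F. norm x \<le> d"
    using \<open>bounded F\<close> bounded_pos by blast
  then have "F \<subseteq> cball 0 d"
    by auto
  note bounds = card_inter_cball_bounds[OF \<Lambda> \<Gamma> F \<open>F \<in> sets borel\<close> this fin]
  have "\<forall>\<^sub>F R in at_top.
      real (card (cosets \<Lambda> \<Gamma>)) * unit_ball_vol DIM('a) * (R - d) ^ DIM('a)
        \<le> real (card (\<Lambda> \<inter> cball 0 R)) * measure lborel F \<and>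
      real (card (\<Lambda> \<inter> cball 0 R)) * measure lborel F
        \<le> real (card (cosets \<Lambda> \<Gamma>)) * unit_ball_vol DIM('a) * (R + d) ^ DIM('a)"
    using eventually_ge_at_top[of "\<bar>d\<bar>"]
  proof eventually_elim
    case (elim R)
    then show ?case
      using bounds[of R] content_cball[of "R - d" "0::'a"] content_cball[of "R + d" "0::'a"]
      by (simp add: mult.assoc)
  qed
  then show ?thesis
    by (rule tendsto_divide_power_at_top_if_sandwiched)
qed

section \<open>Lattices\<close>

lemma add_subgroup_integer_points: "add_subgroup {x::'a::euclidean_space. \<forall>b\<in>Basis. x \<bullet> b \<in> \<int>}"
  by (auto simp: add_subgroup_def inner_diff_left)

lemma Ints_floor_iff:
  fixes x y :: real
  shows "x \<in> \<int> \<and> y - x \<in> {0..<1} \<longleftrightarrow> x = of_int \<lfloor>y\<rfloor>"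
proof
  assume "x \<in> \<int> \<and> y - x \<in> {0..<1}"
  then obtain i where "x = of_int i" "of_int i \<le> y" "y < of_int i + 1"
    by (auto elim!: Ints_cases)
  then show "x = of_int \<lfloor>y\<rfloor>"
    by (simp add: floor_unique)
next
  assume "x = of_int \<lfloor>y\<rfloor>"
  then show "x \<in> \<int> \<and> y - x \<in> {0..<1}"
    using of_int_floor_le[of y] real_of_int_floor_add_one_gt[of y] by (auto; linarith)
qed

lemma fundamental_domain_integer_points:
  "fundamental_domain {x::'a::euclidean_space. \<forall>b\<in>Basis. x \<bullet> b \<in> \<int>} {x. \<forall>b\<in>Basis. x \<bullet> b \<in> {0..<1}}"
  unfolding fundamental_domain_def
proof
  fix z :: 'a
  define w where "w = (\<Sum>b\<in>Basis. of_int \<lfloor>z \<bullet> b\<rfloor> *\<^sub>R b)"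
  have w: "w \<bullet> b = of_int \<lfloor>z \<bullet> b\<rfloor>" if "b \<in> Basis" for b
    using that by (simp add: w_def inner_sum_left inner_Basis if_distrib cong: if_cong)
  have iff: "g \<in> {x. \<forall>b\<in>Basis. x \<bullet> b \<in> \<int>} \<and> z - g \<in> {x. \<forall>b\<in>Basis. x \<bullet> b \<in> {0..<1}}
      \<longleftrightarrow> (\<forall>b\<in>Basis. g \<bullet> b = w \<bullet> b)" for g
    using Ints_floor_iff[of "g \<bullet> _" "z \<bullet> _"] by (auto simp: w inner_diff_left)
  show "\<exists>!g. g \<in> {x. \<forall>b\<in>Basis. x \<bullet> b \<in> \<int>} \<and> z - g \<in> {x. \<forall>b\<in>Basis. x \<bullet> b \<in> {0..<1}}"
    unfolding iff by (rule ex1I[of _ w]) (simp, metis euclidean_eqI)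
qed

lemma fundamental_domain_linear_image:
  assumes "linear f" "\<And>x. g (f x) = x" "\<And>y. f (g y) = y" and F: "fundamental_domain \<Gamma> F"
  shows "fundamental_domain (f ` \<Gamma>) (f ` F)"
  unfolding fundamental_domain_def
proof
  fix z
  have iff: "z - f \<gamma> \<in> f ` F \<longleftrightarrow> g z - \<gamma> \<in> F" for \<gamma>
  proof -
    have "z - f \<gamma> = f (g z - \<gamma>)"
      using assms(1,3) by (simp add: linear_diff)
    then show ?thesis
      using assms(2) by (metis image_iff)
  qed
  obtain \<gamma> where \<gamma>: "\<gamma> \<in> \<Gamma>" "g z - \<gamma> \<in> F" and unique: "\<And>\<gamma>'. \<gamma>' \<in> \<Gamma> \<Longrightarrow> g z - \<gamma>' \<in> F \<Longrightarrow> \<gamma>' = \<gamma>"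
    using F unfolding fundamental_domain_def by metis
  show "\<exists>!\<gamma>'. \<gamma>' \<in> f ` \<Gamma> \<and> z - \<gamma>' \<in> f ` F"
  proof (rule ex1I)
    show "f \<gamma> \<in> f ` \<Gamma> \<and> z - f \<gamma> \<in> f ` F"
      using \<gamma> iff by blast
    fix \<gamma>' assume "\<gamma>' \<in> f ` \<Gamma> \<and> z - \<gamma>' \<in> f ` F"
    then obtain \<gamma>\<^sub>1 where "\<gamma>\<^sub>1 \<in> \<Gamma>" "\<gamma>' = f \<gamma>\<^sub>1" "g z - \<gamma>\<^sub>1 \<in> F"
      using iff by blast
    then show "\<gamma>' = f \<gamma>"
      using unique by blast
  qed
qed

lemma lattice_add_subgroup: "is_lattice L \<Longrightarrow> add_subgroup L"
  unfolding is_lattice_def add_subgroup_def by (metis diff_conv_add_uminus)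

lemma lattice_uniform_discrete:
  assumes "is_lattice L"
  shows "uniform_discrete L"
proof -
  obtain e where "e > 0" and e: "\<And>y. y \<in> L \<Longrightarrow> dist y 0 < e \<Longrightarrow> y = 0"
    using assms unfolding is_lattice_def by blast
  show ?thesis
  proof (rule uniformI1[OF \<open>e > 0\<close>])
    fix x y assume "x \<in> L" "y \<in> L" "dist x y < e"
    then have "x - y = 0"
      using e[of "x - y"] add_subgroup_diff[OF lattice_add_subgroup[OF assms]] by (simp add: dist_norm)
    then show "x = y" by simp
  qed
qed

lemma lattice_finite_inter_cball:
  assumes "is_lattice L"
  shows "finite (L \<inter> cball 0 r)"
  using uniform_discrete_finite_iff uniform_discrete_subset[OF lattice_uniform_discrete[OF assms]]
  by blast

lemma inj_similarity:
  assumes "linear T" "c > 0" "\<And>x. norm (T x) = c * norm x"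
  shows "inj T"
  unfolding linear_injective_0[OF assms(1)]
proof (intro allI impI)
  fix x assume "T x = 0"
  then have "c * norm x = 0"
    by (metis assms(3) norm_zero)
  then show "x = 0"
    using assms(2) by simp
qed

lemma lattice_similarity_image:
  fixes L :: "(real^'m) set" and T :: "real^'m \<Rightarrow> real^'m"
  assumes L: "is_lattice L" and T: "linear T" "c > 0" "\<And>x. norm (T x) = c * norm x"
  shows "is_lattice (T ` L)"
proof -
  have dist_T: "dist (T x) (T y) = c * dist x y" for x y
    using T by (simp add: dist_norm linear_diff[symmetric])
  have "surj T"
    using T(1) inj_similarity[OF T] by (rule linear_inj_imp_surj)
  have "span (T ` L) = UNIV"
    using L \<open>surj T\<close> by (simp add: is_lattice_def span_linear_image[OF T(1)])
  moreover have "\<exists>e>0. \<forall>y\<in>T ` L. dist y x < e \<longrightarrow> y = x" if "x \<in> T ` L" for x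
  proof -
    obtain x' e where "x' \<in> L" "x = T x'" "e > 0" and e: "\<forall>y\<in>L. dist y x' < e \<longrightarrow> y = x'"
      using L \<open>x \<in> T ` L\<close> unfolding is_lattice_def by blast
    then show ?thesis
      using T(2) by (intro exI[of _ "c * e"]) (auto simp: dist_T)
  qed
  moreover have G: "add_subgroup (T ` L)"
    using add_subgroup_linear_image[OF T(1) lattice_add_subgroup[OF L]] .
  ultimately show ?thesis
    unfolding is_lattice_def
    using add_subgroup_zero[OF G] add_subgroup_add[OF G] add_subgroup_minus[OF G] by blast
qed

lemma card_inter_cball_similarity_image:
  fixes L :: "'a::real_normed_vector set" and T :: "'a \<Rightarrow> 'a"
  assumes T: "linear T" "c > 0" "\<And>x. norm (T x) = c * norm x"
  shows "card (T ` L \<inter> cball 0 r) = card (L \<inter> cball 0 (r / c))"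
proof -
  have "T ` L \<inter> cball 0 r = T ` (L \<inter> cball 0 (r / c))"
    using T by (auto simp: field_simps)
  then show ?thesis
    using inj_similarity[OF T] by (simp add: card_image inj_on_subset[of T UNIV])
qed

lemma lattice_basis:
  fixes L :: "(real^'m) set"
  assumes "is_lattice L"
  obtains B B' :: "real^'m \<Rightarrow> real^'m"
  where "linear B" "linear B'" "\<And>x. B' (B x) = x" "\<And>y. B (B' y) = y" "B ` Basis \<subseteq> L"
proof -
  obtain S where S: "S \<subseteq> L" "independent S" "L \<subseteq> span S"
    by (rule maximal_independent_subset)
  have "span S = UNIV"
    using assms span_mono[OF S(3)] by (auto simp: is_lattice_def span_span)
  then have "card S = card (Basis :: (real^'m) set)"
    using basis_card_eq_dim[of S UNIV] S(2) by simp
  then obtain g where g: "bij_betw g (Basis :: (real^'m) set) S"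
    using finite_same_card_bij[of "Basis :: (real^'m) set" S] independent_bound[OF S(2)] by auto
  obtain B where B: "linear B" "\<forall>x\<in>Basis. B x = g x" "range B = span (g ` Basis)"
    using linear_independent_extend_subspace[OF independent_Basis, of g] by blast
  have "surj B"
    using B(3) g \<open>span S = UNIV\<close> by (simp add: bij_betw_def)
  then obtain B' where B': "linear B'" "\<forall>x. B' (B x) = x" "\<forall>y. B (B' y) = y"
    using linear_surjective_isomorphism[OF B(1)] by blast
  show ?thesis
    by (rule that[OF B(1) B'(1)]) (use B' B(2) g S(1) in \<open>auto simp: bij_betw_def\<close>)
qed

lemma linear_image_integer_points_subset:
  fixes B :: "'a::euclidean_space \<Rightarrow> 'b::real_vector"
  assumes B: "linear B" "B ` Basis \<subseteq> G" and G: "add_subgroup G"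
  shows "B ` {x. \<forall>b\<in>Basis. x \<bullet> b \<in> \<int>} \<subseteq> G"
proof
  fix y assume "y \<in> B ` {x. \<forall>b\<in>Basis. x \<bullet> b \<in> \<int>}"
  then obtain x where x: "\<forall>b\<in>Basis. x \<bullet> b \<in> \<int>" "y = B x"
    by blast
  have "B x = B (\<Sum>b\<in>Basis. (x \<bullet> b) *\<^sub>R b)"
    by (simp add: euclidean_representation)
  also have "\<dots> = (\<Sum>b\<in>Basis. (x \<bullet> b) *\<^sub>R B b)"
    by (simp add: linear_sum[OF B(1)] linear_scale[OF B(1)])
  also have "\<dots> \<in> G"
    using x(1) B(2) by (intro add_subgroup_sum[OF G] add_subgroup_Ints_scaleR[OF G]) auto
  finally show "y \<in> G"
    using x(2) by simp
qed

lemma sets_borel_linear_image: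
  fixes B B' :: "'a::euclidean_space \<Rightarrow> 'a"
  assumes "linear B'" "\<And>x. B' (B x) = x" "\<And>y. B (B' y) = y" and "S \<in> sets borel"
  shows "B ` S \<in> sets borel"
proof -
  have "B ` S = B' -` S"
  proof
    show "B ` S \<subseteq> B' -` S"
      using assms(2) by auto
    show "B' -` S \<subseteq> B ` S"
    proof
      fix y assume "y \<in> B' -` S"
      then show "y \<in> B ` S"
        using assms(3)[of y] by (metis image_eqI vimageD)
    qed
  qed
  moreover have "B' \<in> borel_measurable borel"
    using assms(1) by (intro borel_measurable_continuous_onI linear_continuous_on) (simp add: linear_conv_bounded_linear)
  ultimately show ?thesis
    using assms(4) by (simp add: measurable_sets_borel)
qed

text \<open>\<open>\<Gamma>\<close> is the integer span of a basis chosen inside \<open>L\<close> and may be a proper subgroup of \<open>L\<close>;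
  this is why all counting is done modulo \<open>\<Gamma>\<close>.\<close>

lemma lattice_fundamental_domain:
  fixes L :: "(real^'m) set"
  assumes L: "is_lattice L"
  obtains \<Gamma> F where "add_subgroup \<Gamma>" "\<Gamma> \<subseteq> L" "fundamental_domain \<Gamma> F" "F \<in> sets borel" "bounded F"
proof -
  obtain B B' :: "real^'m \<Rightarrow> real^'m"
    where B: "linear B" "linear B'" "\<And>x. B' (B x) = x" "\<And>y. B (B' y) = y" "B ` Basis \<subseteq> L"
    using lattice_basis[OF L] by metis
  define Z :: "(real^'m) set" where "Z = {x. \<forall>b\<in>Basis. x \<bullet> b \<in> \<int>}"
  define U :: "(real^'m) set" where "U = {x. \<forall>b\<in>Basis. x \<bullet> b \<in> {0..<1}}"
  show ?thesis
  proof (rule that)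
    show "add_subgroup (B ` Z)"
      unfolding Z_def by (rule add_subgroup_linear_image[OF B(1) add_subgroup_integer_points])
    show "B ` Z \<subseteq> L"
      unfolding Z_def by (rule linear_image_integer_points_subset[OF B(1,5) lattice_add_subgroup[OF L]])
    show "fundamental_domain (B ` Z) (B ` U)"
      unfolding Z_def U_def
      by (rule fundamental_domain_linear_image[OF B(1,3,4) fundamental_domain_integer_points])
    show "B ` U \<in> sets borel"
      unfolding U_def by (rule sets_borel_linear_image[OF B(2-4)]) measurable
    have "U \<subseteq> cbox 0 One"
      by (fastforce simp: U_def mem_box)
    then show "bounded (B ` U)"
      using B(1) by (intro bounded_linear_image bounded_subset[OF bounded_cbox]) (auto simp: linear_conv_bounded_linear)
  qed
qed

lemma lattice_min_norm_attained:
  fixes L :: "(real^'m) set"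
  assumes L: "is_lattice L"
  obtains u where "u \<in> L" "u \<noteq> 0" "min_norm L = norm u"
proof -
  have "\<exists>x\<in>L. x \<noteq> 0"
  proof (rule ccontr)
    assume "\<not> (\<exists>x\<in>L. x \<noteq> 0)"
    then have "span L \<subseteq> {0}"
      using span_mono[of L "{0}"] by auto
    moreover have "axis undefined 1 \<noteq> (0::real^'m)"
      by simp
    ultimately show False
      using L by (auto simp: is_lattice_def)
  qed
  then obtain x where x: "x \<in> L" "x \<noteq> 0"
    by blast
  define S where "S = L \<inter> cball 0 (norm x) - {0}"
  have "finite S" "x \<in> S"
    using lattice_finite_inter_cball[OF L] x by (auto simp: S_def)
  define u where "u = arg_min_on norm S"
  have "u \<in> S"
    unfolding u_def using \<open>finite S\<close> \<open>x \<in> S\<close> by (intro arg_min_if_finite) auto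
  have "norm u \<le> norm y" if "y \<in> L" "y \<noteq> 0" for y
  proof (cases "norm y \<le> norm x")
    case True
    then show ?thesis
      unfolding u_def using \<open>finite S\<close> that by (intro arg_min_least) (auto simp: S_def)
  next
    case False
    then show ?thesis
      using \<open>u \<in> S\<close> by (simp add: S_def)
  qed
  then have "min_norm L = norm u"
    unfolding min_norm_def using \<open>u \<in> S\<close> by (intro cInf_eq_minimum) (auto simp: S_def)
  then show ?thesis
    using that \<open>u \<in> S\<close> by (auto simp: S_def)
qed

lemma card_cosets_similarity_image:
  fixes L :: "(real^'m) set" and T :: "real^'m \<Rightarrow> real^'m"
  assumes L: "is_lattice L" and T: "linear T" "c > 0" "\<And>x. norm (T x) = c * norm x"
    and \<Gamma>: "add_subgroup \<Gamma>" "\<Gamma> \<subseteq> L" "\<Gamma> \<subseteq> T ` L"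
    and F: "fundamental_domain \<Gamma> F" "F \<in> sets borel" "bounded F"
  shows "real (card (cosets (T ` L) \<Gamma>)) = (1 / c) ^ CARD('m) * real (card (cosets L \<Gamma>))"
proof -
  have TL: "is_lattice (T ` L)"
    by (rule lattice_similarity_image[OF L T])
  define \<omega> where "\<omega> = unit_ball_vol CARD('m)"
  have "\<omega> > 0"
    by (simp add: \<omega>_def)
  define f where "f \<Lambda> R = real (card (\<Lambda> \<inter> cball 0 R)) * measure lborel F / R ^ CARD('m)"
    for \<Lambda> :: "(real^'m) set" and R
  have lim_L: "(f L \<longlongrightarrow> real (card (cosets L \<Gamma>)) * \<omega>) at_top"
    unfolding f_def \<omega>_def using card_inter_cball_asymptotics[OF lattice_add_subgroup[OF L] \<Gamma>(1,2) F
      lattice_finite_inter_cball[OF L]] by simp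
  have "filterlim (\<lambda>R. R / c) at_top at_top"
    using filterlim_at_top_mult_tendsto_pos[OF tendsto_const[of "inverse c"] _ filterlim_ident] T(2)
    by (simp add: divide_inverse)
  from tendsto_mult_left[OF filterlim_compose[OF lim_L this]]
  have "((\<lambda>R. (1 / c) ^ CARD('m) * f L (R / c))
      \<longlongrightarrow> (1 / c) ^ CARD('m) * (real (card (cosets L \<Gamma>)) * \<omega>)) at_top" .
  moreover have "\<forall>\<^sub>F R in at_top. (1 / c) ^ CARD('m) * f L (R / c) = f (T ` L) R"
    using eventually_gt_at_top[of 0]
  proof eventually_elim
    case (elim R)
    then show ?case
      using T(2) by (simp add: f_def card_inter_cball_similarity_image[OF T] power_divide)
  qed
  ultimately have "(f (T ` L) \<longlongrightarrow> (1 / c) ^ CARD('m) * (real (card (cosets L \<Gamma>)) * \<omega>)) at_top"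
    by (rule Lim_transform_eventually)
  moreover have "(f (T ` L) \<longlongrightarrow> real (card (cosets (T ` L) \<Gamma>)) * \<omega>) at_top"
    unfolding f_def \<omega>_def using card_inter_cball_asymptotics[OF lattice_add_subgroup[OF TL] \<Gamma>(1,3) F
      lattice_finite_inter_cball[OF TL]] by simp
  ultimately have "real (card (cosets (T ` L) \<Gamma>)) * \<omega> = (1 / c) ^ CARD('m) * real (card (cosets L \<Gamma>)) * \<omega>"
    using tendsto_unique[OF trivial_limit_at_top_linorder] by (metis mult.assoc)
  then show ?thesis
    using \<open>\<omega> > 0\<close> by simp
qed

lemma card_quotient_set_similarity_image:
  fixes L :: "(real^'m) set" and T :: "real^'m \<Rightarrow> real^'m"
  assumes L: "is_lattice L" and T: "linear T" "c > 0" "\<And>x. norm (T x) = c * norm x" and "L \<subseteq> T ` L"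
  shows "real (card (quotient_set (T ` L) L)) = (1 / c) ^ CARD('m)"
proof -
  obtain \<Gamma> F where \<Gamma>: "add_subgroup \<Gamma>" "\<Gamma> \<subseteq> L" and F: "fundamental_domain \<Gamma> F" "F \<in> sets borel" "bounded F"
    by (rule lattice_fundamental_domain[OF L])
  have TL: "is_lattice (T ` L)"
    by (rule lattice_similarity_image[OF L T])
  have "\<Gamma> \<subseteq> T ` L"
    using \<Gamma>(2) \<open>L \<subseteq> T ` L\<close> by blast
  note subgroups = lattice_add_subgroup[OF L] lattice_add_subgroup[OF TL]
  note finite_cosets = finite_cosets_if_bounded_fundamental_domain[OF _ \<Gamma>(1) _ F(1,3)]
  have "card (cosets (T ` L) \<Gamma>) = card (cosets (T ` L) L) * card (cosets L \<Gamma>)"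
    by (rule card_cosets_tower[OF subgroups(2,1) \<open>L \<subseteq> T ` L\<close> \<Gamma>(1,2)])
      (rule finite_cosets[OF subgroups(2) \<open>\<Gamma> \<subseteq> T ` L\<close> lattice_finite_inter_cball[OF TL]])
  moreover have "card (cosets L \<Gamma>) > 0"
    using finite_cosets[OF subgroups(1) \<Gamma>(2) lattice_finite_inter_cball[OF L]] add_subgroup_zero[OF subgroups(1)]
    by (auto simp: card_gt_0_iff cosets_def)
  ultimately show ?thesis
    using card_cosets_similarity_image[OF L T \<Gamma> \<open>\<Gamma> \<subseteq> T ` L\<close> F]
    by (simp add: quotient_set_def cosets_def)
qed

lemma inverse_power_in_N_set:
  fixes L :: "(real^'m) set" and T :: "real^'m \<Rightarrow> real^'m"
  assumes L: "is_lattice L" and T: "linear T" "c > 0" "\<And>x. norm (T x) = c * norm x" and "L \<subseteq> T ` L"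
  shows "(1 / c) ^ CARD('m) \<in> N_set L"
proof -
  obtain u where u: "u \<in> L" "u \<noteq> 0" "min_norm L = norm u"
    by (rule lattice_min_norm_attained[OF L])
  obtain v where v: "v \<in> L" "u = T v"
    using u(1) \<open>L \<subseteq> T ` L\<close> by blast
  define z where "z = inverse (min_norm L) *\<^sub>R v"
  have "z \<in> normalized_lattice L"
    using v(1) by (auto simp: z_def normalized_lattice_def)
  moreover have "norm z = 1 / c"
  proof -
    have "v \<noteq> 0"
      using u(2) v(2) linear_0[OF T(1)] by auto
    then show ?thesis
      using u(3) v(2) T(2,3) by (simp add: z_def field_simps)
  qed
  ultimately show ?thesis
    unfolding N_set_def using T(2) by force
qed

theorem lemma4p7:
  fixes L :: "(real^'m) set" and C :: "(real^'m) set set"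
  assumes "is_lattice L"
    and "is_lattice_code L C"
  shows "real (card C) \<in> N_set L"
proof -
  obtain T where T: "T \<in> CO" "L \<subseteq> T ` L" "C = quotient_set (T ` L) L"
    using assms(2) unfolding is_lattice_code_def by blast
  then obtain c Q where "c > 0" "orthogonal_transformation Q" "T = (\<lambda>x. c *\<^sub>R Q x)"
    unfolding CO_def by blast
  then have similarity: "linear T" "c > 0" "\<And>x. norm (T x) = c * norm x"
    by (auto intro: real_vector.module_hom_scale orthogonal_transformation_linear
        simp: orthogonal_transformation_norm)
  have "real (card C) = (1 / c) ^ CARD('m)"
    using card_quotient_set_similarity_image[OF assms(1) similarity T(2)] T(3) by simp
  then show ?thesis
    using inverse_power_in_N_set[OF assms(1) similarity T(2)] by simp
qed

end
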